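(* Let $W,V$ be subspaces of $\mathbb{C}^n$ with $\mathbb{C}^n=W\oplus V^\perp$, let $\{\mathbf{w}_i\}_{i=1}^N$ be a frame for $W$ with frame operator $\mathbf{S}=\sum_{i=1}^N\mathbf{w}_i\mathbf{w}_i^*$, and let $\{\mathbf{v}_i\}_{i=1}^N$ be an oblique dual frame of $\{\mathbf{w}_i\}_{i=1}^N$ on $V$ such that $\langle\mathbf{w}_i,\mathbf{v}_i\rangle=\langle\mathbf{w}_j,\mathbf{v}_j\rangle$ for all $i,j$. Let $p=2k$ where $k\ge1$, and let $d_W=\dim W$. Then $$\sum_{i=1}^N\sum_{j=1}^N|\langle\mathbf{w}_i,\mathbf{v}_j\rangle|^p\ge\frac{\left|d_W-\frac{d_W^2}{N}\right|^{p/2}}{N^{\frac p2-1}(N-1)^{\frac p2-1}}+\frac{d_W^p}{N^{p-1}}.$$ Furthermore, when $k>1$, equality holds if and only if $|\langle\mathbf{w}_i,\mathbf{v}_j\rangle|$ is constant over all $i\ne j$ and $\mathbf{v}_j=\boldsymbol{\pi}_{VW^\perp}\mathbf{S}^\dagger\mathbf{w}_j$ for each $j$.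
   Context: The inner product on $\mathbb{C}^n$ is $\langle\mathbf{x},\mathbf{y}\rangle=\mathbf{y}^*\mathbf{x}$. $\mathbf{S}^\dagger$ is the Moore–Penrose inverse. When $\mathbb{C}^n=W\oplus V^\perp$ (equivalently $\mathbb{C}^n=V\oplus W^\perp$), $\boldsymbol{\pi}_{WV^\perp}$ is the oblique projection onto $W$ along $V^\perp$ and $\boldsymbol{\pi}_{VW^\perp}$ the oblique projection onto $V$ along $W^\perp$. A finite family in $W$ is a frame for $W$ if it spans $W$. A frame $\{\mathbf{v}_i\}_{i=1}^N\subset V$ for $V$ is an oblique dual frame of $\{\mathbf{w}_i\}$ on $V$ if $\boldsymbol{\pi}_{WV^\perp}\mathbf{f}=\sum_{i=1}^N\langle\mathbf{f},\mathbf{v}_i\rangle\mathbf{w}_i$ for all $\mathbf{f}\in\mathbb{C}^n$. *)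

theory Defs
  imports "HOL-Analysis.Analysis"
begin

text \<open>Vectors of C^n are modelled as complex^'n; complex-linear notions
  (subspace, span, dim) are those of the interpretation vec of vector_space with
  scalar multiplication (*s).\<close>

definition cinner :: "complex^'n \<Rightarrow> complex^'n \<Rightarrow> complex" where
  "cinner x y = (\<Sum>i\<in>UNIV. x $ i * cnj (y $ i))"

definition corth :: "(complex^'n) set \<Rightarrow> (complex^'n) set" where
  "corth V = {x. \<forall>v\<in>V. cinner x v = 0}"

definition cdirect_sum :: "(complex^'n) set \<Rightarrow> (complex^'n) set \<Rightarrow> bool" where
  "cdirect_sum A B \<longleftrightarrow> A \<inter> B = {0} \<and> (\<forall>x. \<exists>a\<in>A. \<exists>b\<in>B. x = a + b)"

definition oblique_proj :: "(complex^'n) set \<Rightarrow> (complex^'n) set \<Rightarrow> complex^'n \<Rightarrow> complex^'n" where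
  "oblique_proj A B x = (THE a. a \<in> A \<and> x - a \<in> B)"

definition cadjoint :: "complex^'n^'m \<Rightarrow> complex^'m^'n" where
  "cadjoint M = (\<chi> i j. cnj (M $ j $ i))"

definition mp_inverse :: "complex^'n^'m \<Rightarrow> complex^'m^'n" where
  "mp_inverse M = (THE X. M ** X ** M = M \<and> X ** M ** X = X \<and>
      cadjoint (M ** X) = M ** X \<and> cadjoint (X ** M) = X ** M)"

definition frame_for :: "(complex^'n) set \<Rightarrow> (nat \<Rightarrow> complex^'n) \<Rightarrow> nat \<Rightarrow> bool" where
  "frame_for W w N \<longleftrightarrow> (\<forall>i<N. w i \<in> W) \<and> vec.span (w ` {..<N}) = W"

definition frame_operator :: "(nat \<Rightarrow> complex^'n) \<Rightarrow> nat \<Rightarrow> complex^'n^'n" where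
  "frame_operator w N = (\<chi> a b. \<Sum>i<N. w i $ a * cnj (w i $ b))"

definition oblique_dual_frame ::
  "(complex^'n) set \<Rightarrow> (complex^'n) set \<Rightarrow> (nat \<Rightarrow> complex^'n) \<Rightarrow> (nat \<Rightarrow> complex^'n) \<Rightarrow> nat \<Rightarrow> bool" where
  "oblique_dual_frame W V w v N \<longleftrightarrow> frame_for V v N \<and>
     (\<forall>f. oblique_proj W (corth V) f = (\<Sum>i<N. cinner f (v i) *s w i))"

end

theory Submission
  imports Defs
begin

(*
  Let G be the cross-Gram matrix G_ij = <w_i, v_j>. Since the oblique projection onto W
  along V^perp fixes every w_i, G is idempotent, and its trace is d = dim W. For an idempotent
  matrix, sum |G_ij - conj G_ji|^2 = 2 (sum |G_ij|^2 - tr G), so sum |G_ij|^2 >= d, with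
  equality iff G is Hermitian; and G is Hermitian exactly when every v_j is the canonical dual
  vector pi_VW^perp S^dagger w_j. The constant diagonal of G equals d/N, so the squared moduli of
  the N(N-1) off-diagonal entries sum to at least d - d^2/N, and the power-mean inequality
  bounds the sum of their k-th powers; for k > 1 equality forces them to be equal and their
  sum to be exactly d - d^2/N.
*)

section \<open>A complex inner product on \<open>complex^'n\<close>\<close>

lemma cinner_add_left: "cinner (x + y) z = cinner x z + cinner y z"
  by (simp add: cinner_def distrib_right sum.distrib)

lemma cinner_add_right: "cinner z (x + y) = cinner z x + cinner z y"
  by (simp add: cinner_def distrib_left sum.distrib)

lemma cinner_diff_left: "cinner (x - y) z = cinner x z - cinner y z"
  by (simp add: cinner_def left_diff_distrib sum_subtractf)

lemma cinner_diff_right: "cinner z (x - y) = cinner z x - cinner z y"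
  by (simp add: cinner_def right_diff_distrib sum_subtractf)

lemma cinner_scale_left: "cinner (c *s x) z = c * cinner x z"
  by (simp add: cinner_def sum_distrib_left mult.assoc)

lemma cinner_scale_right: "cinner z (c *s x) = cnj c * cinner z x"
  by (simp add: cinner_def sum_distrib_left algebra_simps)

lemma cinner_zero_left [simp]: "cinner 0 z = 0"
  by (simp add: cinner_def)

lemma cinner_zero_right [simp]: "cinner z 0 = 0"
  by (simp add: cinner_def)

lemma cinner_commute: "cinner y x = cnj (cinner x y)"
  by (simp add: cinner_def mult.commute)

lemma cinner_sum_left: "finite A \<Longrightarrow> cinner (\<Sum>i\<in>A. f i) z = (\<Sum>i\<in>A. cinner (f i) z)"
  by (induct A rule: finite_induct) (auto simp: cinner_add_left)

lemma cinner_sum_right: "finite A \<Longrightarrow> cinner z (\<Sum>i\<in>A. f i) = (\<Sum>i\<in>A. cinner z (f i))"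
  by (induct A rule: finite_induct) (auto simp: cinner_add_right)

lemma cinner_self: "cinner x x = of_real (\<Sum>i\<in>UNIV. (cmod (x $ i))\<^sup>2)"
  unfolding cinner_def of_real_sum by (simp add: complex_norm_square del: of_real_power)

lemma cinner_self_eq_0 [simp]: "cinner x x = 0 \<longleftrightarrow> x = 0"
proof
  assume "cinner x x = 0"
  then have "(\<Sum>i\<in>UNIV. (cmod (x $ i))\<^sup>2) = 0"
    unfolding cinner_self of_real_eq_0_iff .
  then show "x = 0"
    by (subst (asm) sum_nonneg_eq_0_iff) (auto simp: vec_eq_iff)
qed simp

lemma Re_cinner: "Re (cinner x y) = x \<bullet> y"
  by (simp add: cinner_def inner_vec_def inner_complex_def Re_sum)

lemma cinner_eqI: "(\<And>x. cinner x y = cinner x z) \<Longrightarrow> y = z"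
  using cinner_self_eq_0[of "y - z"] by (metis cinner_diff_right right_minus_eq)

lemma corthD: "b \<in> corth A \<Longrightarrow> a \<in> A \<Longrightarrow> cinner b a = 0"
  by (simp add: corth_def)

lemma corthD': "b \<in> corth A \<Longrightarrow> a \<in> A \<Longrightarrow> cinner a b = 0"
  by (subst cinner_commute) (simp add: corth_def)

lemma subspace_corth: "vec.subspace (corth A)"
  unfolding vec.subspace_def corth_def by (auto simp: cinner_add_left cinner_scale_left)

lemma mem_corth_self: "x \<in> A \<Longrightarrow> x \<in> corth A \<Longrightarrow> x = 0"
  using corthD cinner_self_eq_0 by blast

lemma corth_span: "corth (vec.span A) = corth A"
proof
  show "corth (vec.span A) \<subseteq> corth A"
    using vec.span_superset unfolding corth_def by blast
  show "corth A \<subseteq> corth (vec.span A)"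
  proof
    fix x assume "x \<in> corth A"
    then have "vec.span A \<subseteq> corth {x}"
      by (intro vec.span_minimal subspace_corth) (auto simp: corth_def intro: corthD')
    then show "x \<in> corth (vec.span A)"
      unfolding corth_def[of "vec.span A"] using corthD' by blast
  qed
qed

lemma scaleR_eq_complex_scale: "r *\<^sub>R (x::complex^'n) = of_real r *s x"
  unfolding vec_eq_iff
  by (metis vector_scaleR_component vector_smult_component scaleR_conv_of_real)

lemma subspace_if_vec_subspace: "vec.subspace (R::(complex^'n) set) \<Longrightarrow> subspace R"
  unfolding subspace_def vec.subspace_def by (metis scaleR_eq_complex_scale)

text \<open>The real orthogonal decomposition of \<open>complex^'n = real^(2n)\<close> is already the
  complex one: a vector orthogonal over \<open>\<real>\<close> to both \<open>r\<close> and \<open>\<i> r\<close> is orthogonal to \<open>r\<close>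
  over \<open>\<complex>\<close>.\<close>
lemma corth_decomp:
  assumes "vec.subspace R"
  obtains a b where "a \<in> R" "b \<in> corth R" "x = a + b"
proof -
  have span_R: "span R = R"
    using subspace_if_vec_subspace[OF assms] by simp
  obtain a b where a: "a \<in> span R" and b: "\<And>r. r \<in> span R \<Longrightarrow> orthogonal b r"
    and x: "x = a + b"
    using orthogonal_subspace_decomp_exists[of R x] by blast
  have "cinner b r = 0" if r: "r \<in> R" for r
  proof -
    have "\<i> *s r \<in> R"
      using r assms by (simp add: vec.subspace_scale)
    then have "Re (cinner b (\<i> *s r)) = 0"
      using b span_R by (simp add: Re_cinner orthogonal_def)
    then have "Im (cinner b r) = 0"
      by (simp add: cinner_scale_right)
    moreover have "Re (cinner b r) = 0"
      using b span_R r by (simp add: Re_cinner orthogonal_def)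
    ultimately show ?thesis
      by (simp add: complex_eq_iff)
  qed
  then have "b \<in> corth R"
    by (simp add: corth_def)
  then show thesis
    using that a x span_R by blast
qed

section \<open>Oblique projections and the Moore--Penrose inverse\<close>

lemma oblique_proj_eqI:
  assumes "vec.subspace A" "vec.subspace B" "A \<inter> B = {0}" "a \<in> A" "x - a \<in> B"
  shows "oblique_proj A B x = a"
  unfolding oblique_proj_def
proof (rule the_equality)
  show "a \<in> A \<and> x - a \<in> B"
    using assms by simp
  fix b assume b: "b \<in> A \<and> x - b \<in> B"
  have "b - a \<in> A"
    using b assms by (simp add: vec.subspace_diff)
  moreover have "(x - a) - (x - b) \<in> B"
    using b vec.subspace_diff[OF assms(2,5), of "x - b"] by simp
  ultimately have "b - a \<in> A \<inter> B"
    by simp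
  then show "b = a"
    using assms(3) by simp
qed

lemma cinner_matrix_vector_mult: "cinner (M *v x) y = cinner x (cadjoint M *v y)"
  unfolding cinner_def cadjoint_def matrix_vector_mult_def
  by (simp add: sum_distrib_left sum_distrib_right mult_ac) (subst sum.swap, simp add: mult_ac)

lemma cadjoint_matrix_mult: "cadjoint (A ** B) = cadjoint B ** cadjoint A"
  by (simp add: cadjoint_def vec_eq_iff matrix_matrix_mult_def mult.commute)

lemma cadjoint_eqI:
  assumes "\<And>x y. cinner (M *v x) y = cinner x (M *v y)"
  shows "cadjoint M = M"
proof -
  have "cadjoint M *v y = M *v y" for y
    by (rule cinner_eqI) (simp add: assms cinner_matrix_vector_mult[symmetric])
  then show ?thesis
    by (simp add: matrix_eq)
qed

lemma cadjoint_orthogonal_projection: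
  fixes M :: "complex^'n^'n"
  assumes "vec.subspace W" and proj: "\<And>a b. a \<in> W \<Longrightarrow> b \<in> corth W \<Longrightarrow> M *v (a + b) = a"
  shows "cadjoint M = M"
proof (rule cadjoint_eqI)
  fix x y :: "complex^'n"
  obtain a b where ab: "a \<in> W" "b \<in> corth W" "x = a + b"
    using corth_decomp[OF assms(1)] by blast
  obtain a' b' where ab': "a' \<in> W" "b' \<in> corth W" "y = a' + b'"
    using corth_decomp[OF assms(1)] by blast
  show "cinner (M *v x) y = cinner x (M *v y)"
    using ab ab' proj corthD[OF ab(2) ab'(1)] corthD'[OF ab'(2) ab(1)]
    by (simp add: cinner_add_left cinner_add_right)
qed

definition penrose_inverse :: "complex^'n^'m \<Rightarrow> complex^'m^'n \<Rightarrow> bool" where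
  "penrose_inverse M X \<longleftrightarrow> M ** X ** M = M \<and> X ** M ** X = X \<and>
     cadjoint (M ** X) = M ** X \<and> cadjoint (X ** M) = X ** M"

lemma penrose_inverse_unique:
  assumes "penrose_inverse M X" "penrose_inverse M Y"
  shows "X = Y"
proof -
  have X: "M ** X ** M = M" "X ** M ** X = X" "cadjoint (M ** X) = M ** X"
    "cadjoint (X ** M) = X ** M" and Y: "M ** Y ** M = M" "Y ** M ** Y = Y"
    "cadjoint (M ** Y) = M ** Y" "cadjoint (Y ** M) = Y ** M"
    using assms by (auto simp: penrose_inverse_def)
  have MY: "cadjoint M = cadjoint M ** M ** Y"
  proof -
    have "cadjoint M = cadjoint ((M ** Y) ** M)"
      using Y(1) by simp
    also have "\<dots> = cadjoint M ** cadjoint (M ** Y)"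
      by (rule cadjoint_matrix_mult)
    finally show ?thesis
      using Y(3) by (simp add: matrix_mul_assoc)
  qed
  have XM: "cadjoint M = X ** M ** cadjoint M"
  proof -
    have "cadjoint M = cadjoint (M ** (X ** M))"
      using X(1) by (simp add: matrix_mul_assoc)
    then show ?thesis
      using X(4) by (simp add: cadjoint_matrix_mult)
  qed
  have X_expand: "X = X ** cadjoint X ** cadjoint M"
  proof -
    have "X = X ** cadjoint (M ** X)"
      using X(2,3) by (simp add: matrix_mul_assoc)
    then show ?thesis
      by (simp add: cadjoint_matrix_mult matrix_mul_assoc)
  qed
  have Y_expand: "Y = cadjoint M ** cadjoint Y ** Y"
  proof -
    have "Y = cadjoint (Y ** M) ** Y"
      using Y(2,4) by simp
    then show ?thesis
      by (simp add: cadjoint_matrix_mult)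
  qed
  have "X = X ** cadjoint X ** (cadjoint M ** M ** Y)"
    using X_expand MY by metis
  also have "\<dots> = X ** M ** Y"
    using X_expand by (simp add: matrix_mul_assoc)
  finally have X_eq: "X = X ** M ** Y" .
  have "Y = X ** M ** cadjoint M ** cadjoint Y ** Y"
    using XM Y_expand by metis
  also have "\<dots> = X ** M ** (cadjoint M ** cadjoint Y ** Y)"
    by (simp add: matrix_mul_assoc)
  also have "\<dots> = X ** M ** Y"
    using Y_expand by simp
  finally show ?thesis
    using X_eq by simp
qed

lemma mp_inverse_eqI: "penrose_inverse M X \<Longrightarrow> mp_inverse M = X"
  unfolding mp_inverse_def
  by (rule the_equality) (auto simp: penrose_inverse_def[symmetric] intro: penrose_inverse_unique)

section \<open>Frame operators\<close>

lemma frame_operator_mult_vec: "frame_operator u N *v x = (\<Sum>i<N. cinner x (u i) *s u i)"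
  unfolding vec_eq_iff frame_operator_def matrix_vector_mult_def cinner_def
  by (simp add: sum_component sum_distrib_left sum_distrib_right mult_ac)
     (subst sum.swap, simp add: mult_ac)

lemma cinner_frame_operator: "cinner (frame_operator u N *v x) y = cinner x (frame_operator u N *v y)"
  unfolding frame_operator_mult_vec
  by (simp add: cinner_sum_left cinner_sum_right cinner_scale_left cinner_scale_right)
     (rule sum.cong, simp, subst (2) cinner_commute, simp add: mult.commute)

lemma cinner_frame_operator_self:
  "cinner (frame_operator u N *v x) x = of_real (\<Sum>i<N. (cmod (cinner x (u i)))\<^sup>2)"
proof -
  have "cinner (u i) x = cnj (cinner x (u i))" for i
    by (rule cinner_commute)
  then show ?thesis
    unfolding frame_operator_mult_vec of_real_sum
    by (simp add: cinner_sum_left cinner_scale_left complex_mult_cnj cmod_power2)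
qed

lemma frame_operator_mem:
  assumes "vec.subspace W" "\<And>i. i < N \<Longrightarrow> u i \<in> W"
  shows "frame_operator u N *v x \<in> W"
  unfolding frame_operator_mult_vec using assms by (intro vec.subspace_sum vec.subspace_scale) auto

lemma frame_operator_corth:
  assumes "\<And>i. i < N \<Longrightarrow> u i \<in> W" "b \<in> corth W"
  shows "frame_operator u N *v b = 0"
  unfolding frame_operator_mult_vec using assms by (simp add: corthD)

lemma frame_dim_le:
  assumes "frame_for W w N"
  shows "vec.dim W \<le> N"
proof -
  have "vec.dim W \<le> card (w ` {..<N})"
    using assms by (intro vec.dim_le_card) (auto simp: frame_for_def)
  also have "\<dots> \<le> N"
    using card_image_le[of "{..<N}" w] by simp
  finally show ?thesis .
qed

locale subspace_frame =
  fixes W :: "(complex^'n) set" and w :: "nat \<Rightarrow> complex^'n" and N :: nat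
  assumes subspace_W: "vec.subspace W" and frame: "frame_for W w N"
begin

abbreviation S :: "complex^'n^'n" where "S \<equiv> frame_operator w N"

lemma frame_mem: "i < N \<Longrightarrow> w i \<in> W"
  using frame by (simp add: frame_for_def)

lemma frame_operator_mem_W: "S *v x \<in> W"
  by (rule frame_operator_mem[OF subspace_W frame_mem])

lemma frame_operator_eq_0_iff: "S *v x = 0 \<longleftrightarrow> x \<in> corth W"
proof
  assume "S *v x = 0"
  then have "(\<Sum>i<N. (cmod (cinner x (w i)))\<^sup>2) = 0"
    using cinner_frame_operator_self[of w N x] by (metis cinner_zero_left of_real_eq_0_iff)
  then have "x \<in> corth (w ` {..<N})"
    by (subst (asm) sum_nonneg_eq_0_iff) (auto simp: corth_def)
  then show "x \<in> corth W"
    using frame corth_span by (metis frame_for_def)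
qed (rule frame_operator_corth[OF frame_mem])

lemma frame_operator_add_corth: "b \<in> corth W \<Longrightarrow> S *v (a + b) = S *v a"
  by (simp add: matrix_vector_right_distrib frame_operator_eq_0_iff)

lemma frame_operator_inj_on_W:
  assumes "a \<in> W" "a' \<in> W" "S *v a = S *v a'"
  shows "a = a'"
proof -
  have "a - a' \<in> corth W"
    using assms(3) by (simp add: matrix_vector_mult_diff_distrib frame_operator_eq_0_iff[symmetric])
  moreover have "a - a' \<in> W"
    using assms(1,2) subspace_W by (simp add: vec.subspace_diff)
  ultimately show ?thesis
    using mem_corth_self by fastforce
qed

text \<open>If \<open>y \<in> W\<close> had a component \<open>z\<close> orthogonal to the range of \<open>S\<close>, then
  \<open>\<langle>S z, S z\<rangle> = \<langle>z, S (S z)\<rangle> = 0\<close> would put \<open>z\<close> into \<open>W \<inter> W\<^sup>\<bottom> = {0}\<close>.\<close>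
lemma frame_operator_onto_W:
  assumes "y \<in> W"
  obtains a where "a \<in> W" "S *v a = y"
proof -
  obtain s z where s: "s \<in> range ((*v) S)" and z: "z \<in> corth (range ((*v) S))"
    and y: "y = s + z"
    using corth_decomp[OF vec.subspace_image[OF vec.subspace_UNIV]] by blast
  have "cinner (S *v z) (S *v z) = cinner z (S *v (S *v z))"
    by (rule cinner_frame_operator)
  also have "\<dots> = 0"
    using z by (simp add: corthD)
  finally have "z \<in> corth W"
    by (simp add: frame_operator_eq_0_iff[symmetric])
  moreover have "z \<in> W"
    using assms s y frame_operator_mem_W subspace_W
    by (metis add_diff_cancel_left' image_iff vec.subspace_diff)
  ultimately have "y = s"
    using y mem_corth_self by simp
  then obtain t where t: "y = S *v t"
    using s by auto
  obtain a b where "a \<in> W" "b \<in> corth W" "t = a + b"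
    using corth_decomp[OF subspace_W] by blast
  then show thesis
    using that t frame_operator_add_corth by auto
qed

definition canonical_dual :: "nat \<Rightarrow> complex^'n" where
  "canonical_dual j = (SOME a. a \<in> W \<and> S *v a = w j)"

lemma canonical_dual: "j < N \<Longrightarrow> canonical_dual j \<in> W \<and> S *v canonical_dual j = w j"
  unfolding canonical_dual_def
  by (rule someI_ex) (meson frame_operator_onto_W frame_mem)

abbreviation S_dual :: "complex^'n^'n" where "S_dual \<equiv> frame_operator canonical_dual N"

lemma S_dual_mem_W: "S_dual *v x \<in> W"
  by (rule frame_operator_mem[OF subspace_W]) (simp add: canonical_dual)

lemma frame_operator_S_dual:
  assumes "a \<in> W"
  shows "S *v (S_dual *v a) = a"
proof -
  obtain t where t: "t \<in> W" "S *v t = a"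
    using frame_operator_onto_W[OF assms] by blast
  have "S *v (S_dual *v a) = (\<Sum>j<N. cinner (S *v t) (canonical_dual j) *s w j)"
    unfolding frame_operator_mult_vec[of canonical_dual] t(2)[symmetric]
    by (simp add: vec.sum vec.scale canonical_dual)
  also have "\<dots> = (\<Sum>j<N. cinner t (w j) *s w j)"
    by (rule sum.cong) (simp_all add: cinner_frame_operator canonical_dual)
  also have "\<dots> = a"
    using t by (simp add: frame_operator_mult_vec)
  finally show ?thesis .
qed

lemma S_dual_frame_operator: "a \<in> W \<Longrightarrow> S_dual *v (S *v a) = a"
  using frame_operator_inj_on_W[OF S_dual_mem_W] frame_operator_S_dual[OF frame_operator_mem_W]
  by blast

lemma penrose_inverse_S_dual: "penrose_inverse S S_dual"
proof -
  have S_dual_corth: "S_dual *v b = 0" if "b \<in> corth W" for b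
    using that by (intro frame_operator_corth) (simp_all add: canonical_dual)
  have "S ** S_dual ** S = S"
  proof (rule iffD2[OF matrix_eq], rule allI)
    fix y
    obtain a b where "a \<in> W" "b \<in> corth W" "y = a + b"
      using corth_decomp[OF subspace_W] by blast
    then show "(S ** S_dual ** S) *v y = S *v y"
      by (simp add: matrix_vector_mul_assoc[symmetric] frame_operator_add_corth S_dual_frame_operator)
  qed
  moreover have "S_dual ** S ** S_dual = S_dual"
    unfolding matrix_eq
    by (simp add: matrix_vector_mul_assoc[symmetric] S_dual_frame_operator S_dual_mem_W)
  moreover have "cadjoint (S ** S_dual) = S ** S_dual"
    by (rule cadjoint_orthogonal_projection[OF subspace_W])
       (simp add: matrix_vector_mul_assoc[symmetric] matrix_vector_right_distrib S_dual_corth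
          frame_operator_S_dual)
  moreover have "cadjoint (S_dual ** S) = S_dual ** S"
    by (rule cadjoint_orthogonal_projection[OF subspace_W])
       (simp add: matrix_vector_mul_assoc[symmetric] frame_operator_add_corth S_dual_frame_operator)
  ultimately show ?thesis
    by (simp add: penrose_inverse_def)
qed

lemma mp_inverse_frame_operator: "mp_inverse S = S_dual"
  by (rule mp_inverse_eqI[OF penrose_inverse_S_dual])

lemma frame_operator_mp_inverse: "a \<in> W \<Longrightarrow> S *v (mp_inverse S *v a) = a"
  by (simp add: mp_inverse_frame_operator frame_operator_S_dual)

lemma mp_inverse_frame_operator_mult: "a \<in> W \<Longrightarrow> mp_inverse S *v (S *v a) = a"
  by (simp add: mp_inverse_frame_operator S_dual_frame_operator)

end

section \<open>Power means\<close>

definition tangent_gap :: "nat \<Rightarrow> real \<Rightarrow> real \<Rightarrow> real" where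
  "tangent_gap k m x = x ^ Suc k - m ^ Suc k - real (Suc k) * m ^ k * (x - m)"

lemma tangent_gap_step:
  "tangent_gap (Suc k) m x = x * tangent_gap k m x + real (Suc k) * m ^ k * (x - m)\<^sup>2"
  by (simp add: tangent_gap_def algebra_simps power2_eq_square)

lemma tangent_gap_nonneg:
  assumes "0 \<le> x" "0 \<le> m"
  shows "0 \<le> tangent_gap k m x"
proof (induction k)
  case 0
  then show ?case
    by (simp add: tangent_gap_def)
next
  case (Suc k)
  then show ?case
    using assms by (simp add: tangent_gap_step)
qed

lemma tangent_gap_pos:
  assumes "0 \<le> x" "0 \<le> m" "x \<noteq> m" "k \<ge> 1"
  shows "0 < tangent_gap k m x"
proof -
  obtain k' where k: "k = Suc k'"
    using assms(4) by (cases k) auto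
  show ?thesis
  proof (cases "m = 0")
    case True
    then show ?thesis
      using assms by (simp add: tangent_gap_def k)
  next
    case False
    then have "0 < real (Suc k') * m ^ k' * (x - m)\<^sup>2"
      using assms by simp
    moreover have "0 \<le> x * tangent_gap k' m x"
      using assms tangent_gap_nonneg by simp
    ultimately show ?thesis
      unfolding k tangent_gap_step by linarith
  qed
qed

lemma sum_tangent_gap_mean:
  fixes x :: "'a \<Rightarrow> real"
  assumes "finite A" "A \<noteq> {}"
  defines "m \<equiv> (\<Sum>s\<in>A. x s) / real (card A)"
  shows "(\<Sum>s\<in>A. tangent_gap k m (x s))
           = (\<Sum>s\<in>A. x s ^ Suc k) - (\<Sum>s\<in>A. x s) ^ Suc k / real (card A) ^ k"
proof -
  have card: "real (card A) > 0"
    using assms by (simp add: card_gt_0_iff)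
  have "(\<Sum>s\<in>A. tangent_gap k m (x s))
      = (\<Sum>s\<in>A. x s ^ Suc k) - real (card A) * m ^ Suc k
        - real (Suc k) * m ^ k * ((\<Sum>s\<in>A. x s) - real (card A) * m)"
    by (simp add: tangent_gap_def sum_subtractf sum_distrib_left[symmetric] right_diff_distrib)
  also have "(\<Sum>s\<in>A. x s) - real (card A) * m = 0"
    using card by (simp add: m_def)
  also have "real (card A) * m ^ Suc k = (\<Sum>s\<in>A. x s) ^ Suc k / real (card A) ^ k"
    using card by (simp add: m_def power_divide field_simps)
  finally show ?thesis
    by simp
qed

lemma power_mean_le:
  fixes x :: "'a \<Rightarrow> real"
  assumes "finite A" "\<And>s. s \<in> A \<Longrightarrow> 0 \<le> x s"
  shows "(\<Sum>s\<in>A. x s) ^ Suc k / real (card A) ^ k \<le> (\<Sum>s\<in>A. x s ^ Suc k)"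
proof (cases "A = {}")
  case False
  have "0 \<le> (\<Sum>s\<in>A. x s) / real (card A)"
    using assms by (simp add: sum_nonneg)
  then have "0 \<le> (\<Sum>s\<in>A. tangent_gap k ((\<Sum>s\<in>A. x s) / real (card A)) (x s))"
    using assms by (intro sum_nonneg tangent_gap_nonneg) auto
  then show ?thesis
    using sum_tangent_gap_mean[OF assms(1) False] by simp
qed simp

lemma power_mean_eq_iff:
  fixes x :: "'a \<Rightarrow> real"
  assumes "finite A" "A \<noteq> {}" "\<And>s. s \<in> A \<Longrightarrow> 0 \<le> x s" "k \<ge> 1"
  shows "(\<Sum>s\<in>A. x s ^ Suc k) = (\<Sum>s\<in>A. x s) ^ Suc k / real (card A) ^ k
           \<longleftrightarrow> (\<exists>c. \<forall>s\<in>A. x s = c)"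
proof -
  define m where "m = (\<Sum>s\<in>A. x s) / real (card A)"
  have m: "0 \<le> m"
    using assms by (simp add: m_def sum_nonneg)
  have "(\<Sum>s\<in>A. x s ^ Suc k) = (\<Sum>s\<in>A. x s) ^ Suc k / real (card A) ^ k
      \<longleftrightarrow> (\<Sum>s\<in>A. tangent_gap k m (x s)) = 0"
    using sum_tangent_gap_mean[OF assms(1,2)] by (simp add: m_def)
  also have "\<dots> \<longleftrightarrow> (\<forall>s\<in>A. tangent_gap k m (x s) = 0)"
    using assms m tangent_gap_nonneg by (intro sum_nonneg_eq_0_iff) auto
  also have "\<dots> \<longleftrightarrow> (\<forall>s\<in>A. x s = m)"
  proof -
    have "tangent_gap k m (x s) = 0 \<longleftrightarrow> x s = m" if "s \<in> A" for s
    proof (cases "x s = m")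
      case True
      then show ?thesis
        by (simp add: tangent_gap_def)
    next
      case False
      then show ?thesis
        using tangent_gap_pos[OF assms(3)[OF that] m False assms(4)] by simp
    qed
    then show ?thesis
      by auto
  qed
  also have "\<dots> \<longleftrightarrow> (\<exists>c. \<forall>s\<in>A. x s = c)"
  proof
    assume "\<exists>c. \<forall>s\<in>A. x s = c"
    then obtain c where "\<forall>s\<in>A. x s = c"
      by blast
    moreover have "(\<Sum>s\<in>A. c) / real (card A) = c"
      using assms(1,2) by simp
    ultimately show "\<forall>s\<in>A. x s = m"
      unfolding m_def by (metis sum.cong)
  qed blast
  finally show ?thesis .
qed

lemma power_mean_lower_bound:
  fixes x :: "'a \<Rightarrow> real"
  assumes "finite A" "\<And>s. s \<in> A \<Longrightarrow> 0 \<le> x s" "0 \<le> D" "D \<le> (\<Sum>s\<in>A. x s)"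
  shows "D ^ Suc k / real (card A) ^ k \<le> (\<Sum>s\<in>A. x s ^ Suc k)"
proof -
  have "D ^ Suc k \<le> (\<Sum>s\<in>A. x s) ^ Suc k"
    by (rule power_mono[OF assms(4,3)])
  then have "D ^ Suc k / real (card A) ^ k \<le> (\<Sum>s\<in>A. x s) ^ Suc k / real (card A) ^ k"
    by (simp add: divide_right_mono)
  also have "\<dots> \<le> (\<Sum>s\<in>A. x s ^ Suc k)"
    by (rule power_mean_le[OF assms(1,2)])
  finally show ?thesis .
qed

lemma power_mean_lower_bound_eq_iff:
  fixes x :: "'a \<Rightarrow> real"
  assumes "finite A" "A \<noteq> {}" "\<And>s. s \<in> A \<Longrightarrow> 0 \<le> x s" "0 \<le> D" "D \<le> (\<Sum>s\<in>A. x s)"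
    and "k \<ge> 1"
  shows "(\<Sum>s\<in>A. x s ^ Suc k) = D ^ Suc k / real (card A) ^ k
           \<longleftrightarrow> (\<exists>c. \<forall>s\<in>A. x s = c) \<and> (\<Sum>s\<in>A. x s) = D"
proof -
  let ?T = "\<Sum>s\<in>A. x s" and ?M = "real (card A) ^ k"
  have M: "0 < ?M"
    using assms(1,2) by (simp add: card_gt_0_iff)
  have strict: "D ^ Suc k / ?M < ?T ^ Suc k / ?M" if "D \<noteq> ?T"
    using power_strict_mono[of D ?T "Suc k"] assms(4,5) M that by (simp add: divide_strict_right_mono)
  have le: "?T ^ Suc k / ?M \<le> (\<Sum>s\<in>A. x s ^ Suc k)"
    by (rule power_mean_le[OF assms(1,3)])
  have eq: "(\<Sum>s\<in>A. x s ^ Suc k) = ?T ^ Suc k / ?M \<longleftrightarrow> (\<exists>c. \<forall>s\<in>A. x s = c)"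
    by (rule power_mean_eq_iff[OF assms(1,2,3,6)])
  show ?thesis
  proof
    assume attained: "(\<Sum>s\<in>A. x s ^ Suc k) = D ^ Suc k / ?M"
    have "?T = D"
    proof (rule ccontr)
      assume "?T \<noteq> D"
      then show False
        using attained le strict by force
    qed
    then show "(\<exists>c. \<forall>s\<in>A. x s = c) \<and> ?T = D"
      using attained eq by simp
  next
    assume "(\<exists>c. \<forall>s\<in>A. x s = c) \<and> ?T = D"
    then show "(\<Sum>s\<in>A. x s ^ Suc k) = D ^ Suc k / ?M"
      using eq by simp
  qed
qed

definition off_diagonal :: "nat \<Rightarrow> (nat \<times> nat) set" where
  "off_diagonal N = {(i, j). i < N \<and> j < N \<and> i \<noteq> j}"

lemma off_diagonal_Sigma: "off_diagonal N = Sigma {..<N} (\<lambda>i. {..<N} - {i})"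
  by (auto simp: off_diagonal_def)

lemma finite_off_diagonal [simp]: "finite (off_diagonal N)"
  by (simp add: off_diagonal_Sigma)

lemma card_off_diagonal: "card (off_diagonal N) = N * (N - 1)"
  by (simp add: off_diagonal_Sigma card_Diff_singleton)

lemma sum_diagonal_off_diagonal:
  "(\<Sum>i<N. \<Sum>j<N. f i j) = (\<Sum>i<N. f i i) + (\<Sum>(i, j)\<in>off_diagonal N. f i j)"
proof -
  have "(\<Sum>i<N. \<Sum>j<N. f i j) = (\<Sum>i<N. f i i + (\<Sum>j\<in>{..<N} - {i}. f i j))"
    by (rule sum.cong) (simp_all add: sum.remove)
  also have "\<dots> = (\<Sum>i<N. f i i) + (\<Sum>(i, j)\<in>off_diagonal N. f i j)"
    by (simp add: sum.distrib off_diagonal_Sigma sum.Sigma)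
  finally show ?thesis .
qed

section \<open>Power sums of matrices with constant diagonal\<close>

lemma sum_const_power_div:
  fixes d :: real
  assumes "2 \<le> m"
  shows "(\<Sum>i<N. (d / real N) ^ m) = d ^ m / real N ^ (m - 1)"
proof (cases "N = 0")
  case False
  obtain m' where "m = Suc m'"
    using assms by (cases m) auto
  then show ?thesis
    using False by (simp add: power_divide field_simps)
qed (use assms in simp)

context
  fixes g :: "nat \<Rightarrow> nat \<Rightarrow> real" and d :: real and N :: nat
  assumes nonneg: "\<And>i j. 0 \<le> g i j"
    and diagonal: "\<And>i. i < N \<Longrightarrow> g i i = d / real N"
    and d_nonneg: "0 \<le> d" and d_le: "d \<le> real N"
    and mass: "d \<le> (\<Sum>i<N. \<Sum>j<N. (g i j)\<^sup>2)"
begin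

lemma sum_power_const_diagonal:
  assumes "2 \<le> m"
  shows "(\<Sum>i<N. \<Sum>j<N. g i j ^ m)
           = d ^ m / real N ^ (m - 1) + (\<Sum>s\<in>off_diagonal N. g (fst s) (snd s) ^ m)"
proof -
  have "(\<Sum>i<N. g i i ^ m) = (\<Sum>i<N. (d / real N) ^ m)"
    using diagonal by simp
  then show ?thesis
    using sum_diagonal_off_diagonal[of "\<lambda>i j. g i j ^ m" N] sum_const_power_div[OF assms]
    by (simp add: case_prod_beta)
qed

lemma mass_deficit_nonneg: "0 \<le> d - d\<^sup>2 / real N"
proof (cases "N = 0")
  case False
  then have "d\<^sup>2 / real N \<le> d"
    using d_nonneg d_le by (simp add: power2_eq_square divide_le_eq mult_left_mono)
  then show ?thesis
    by simp
qed (use d_nonneg d_le in simp)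

lemma off_diagonal_mass_eq:
  "(\<Sum>s\<in>off_diagonal N. (g (fst s) (snd s))\<^sup>2) = (\<Sum>i<N. \<Sum>j<N. (g i j)\<^sup>2) - d\<^sup>2 / real N"
  using sum_power_const_diagonal[of 2] by simp

lemma power_sum_minus_bound:
  assumes "k \<ge> 1"
  shows "(\<Sum>i<N. \<Sum>j<N. g i j ^ (2 * k))
           - (\<bar>d - d\<^sup>2 / real N\<bar> ^ k / (real N ^ (k - 1) * (real N - 1) ^ (k - 1))
              + d ^ (2 * k) / real N ^ (2 * k - 1))
         = (\<Sum>s\<in>off_diagonal N. ((g (fst s) (snd s))\<^sup>2) ^ k)
           - (d - d\<^sup>2 / real N) ^ k / real (card (off_diagonal N)) ^ (k - 1)"
proof -
  have "2 \<le> 2 * k"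
    using assms by simp
  then have "(\<Sum>i<N. \<Sum>j<N. g i j ^ (2 * k)) = d ^ (2 * k) / real N ^ (2 * k - 1)
      + (\<Sum>s\<in>off_diagonal N. ((g (fst s) (snd s))\<^sup>2) ^ k)"
    unfolding power_mult[symmetric] by (rule sum_power_const_diagonal)
  moreover have "real (card (off_diagonal N)) = real N * (real N - 1)"
    by (cases N) (simp_all add: card_off_diagonal algebra_simps)
  ultimately show ?thesis
    using mass_deficit_nonneg by (simp add: power_mult_distrib)
qed

lemma const_diagonal_power_sum_ge:
  assumes "k \<ge> 1"
  shows "\<bar>d - d\<^sup>2 / real N\<bar> ^ k / (real N ^ (k - 1) * (real N - 1) ^ (k - 1))
           + d ^ (2 * k) / real N ^ (2 * k - 1)
         \<le> (\<Sum>i<N. \<Sum>j<N. g i j ^ (2 * k))"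
proof -
  obtain k' where k: "k = Suc k'"
    using assms by (cases k) auto
  have "(d - d\<^sup>2 / real N) ^ Suc k' / real (card (off_diagonal N)) ^ k'
      \<le> (\<Sum>s\<in>off_diagonal N. ((g (fst s) (snd s))\<^sup>2) ^ Suc k')"
    using mass off_diagonal_mass_eq mass_deficit_nonneg
    by (intro power_mean_lower_bound) auto
  then show ?thesis
    using power_sum_minus_bound[OF assms] by (simp add: k)
qed

lemma off_diagonal_const_sq_iff:
  "(\<exists>c. \<forall>s\<in>off_diagonal N. (g (fst s) (snd s))\<^sup>2 = c)
     \<longleftrightarrow> (\<exists>c. \<forall>i<N. \<forall>j<N. i \<noteq> j \<longrightarrow> g i j = c)"
proof
  assume "\<exists>c. \<forall>s\<in>off_diagonal N. (g (fst s) (snd s))\<^sup>2 = c"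
  then obtain c where "\<forall>s\<in>off_diagonal N. (g (fst s) (snd s))\<^sup>2 = c"
    by blast
  then have "g i j = sqrt c" if "i < N" "j < N" "i \<noteq> j" for i j
    using that nonneg[of i j] by (force simp: off_diagonal_def)
  then show "\<exists>c. \<forall>i<N. \<forall>j<N. i \<noteq> j \<longrightarrow> g i j = c"
    by blast
qed (force simp: off_diagonal_def)

lemma const_diagonal_power_sum_eq_iff:
  assumes "k > 1"
  shows "(\<Sum>i<N. \<Sum>j<N. g i j ^ (2 * k))
           = \<bar>d - d\<^sup>2 / real N\<bar> ^ k / (real N ^ (k - 1) * (real N - 1) ^ (k - 1))
             + d ^ (2 * k) / real N ^ (2 * k - 1)
         \<longleftrightarrow> (\<exists>c. \<forall>i<N. \<forall>j<N. i \<noteq> j \<longrightarrow> g i j = c) \<and> (\<Sum>i<N. \<Sum>j<N. (g i j)\<^sup>2) = d"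
    (is "?attained \<longleftrightarrow> ?const \<and> ?mass")
proof -
  obtain k' where k: "k = Suc k'" and k': "k' \<ge> 1"
    using assms by (cases k) auto
  let ?D = "d - d\<^sup>2 / real N" and ?off = "off_diagonal N"
  have "1 \<le> k"
    using assms by simp
  from power_sum_minus_bound[OF this]
  have "?attained \<longleftrightarrow> (\<Sum>s\<in>?off. ((g (fst s) (snd s))\<^sup>2) ^ k) = ?D ^ k / real (card ?off) ^ (k - 1)"
    by (intro iffI) linarith+
  also have "\<dots> \<longleftrightarrow> ?const \<and> ?mass"
  proof (cases "?off = {}")
    case True
    then have "N \<le> 1"
      using card_off_diagonal[of N] by (cases N) auto
    moreover have ?mass
      using True mass mass_deficit_nonneg off_diagonal_mass_eq by simp
    ultimately show ?thesis
      using True k' by (auto simp: k)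
  next
    case False
    have "?mass \<longleftrightarrow> (\<Sum>s\<in>?off. (g (fst s) (snd s))\<^sup>2) = ?D"
      using off_diagonal_mass_eq by auto
    then show ?thesis
      unfolding k diff_Suc_1
      using mass off_diagonal_mass_eq mass_deficit_nonneg False k' off_diagonal_const_sq_iff
      by (subst power_mean_lower_bound_eq_iff) auto
  qed
  finally show ?thesis .
qed

end

section \<open>The cross-Gram matrix of an oblique dual frame\<close>

lemma independent_sum_eq_member:
  assumes "vec.independent E" "finite E" "e \<in> E" "(\<Sum>x\<in>E. c x *s x) = e" "x \<in> E"
  shows "c x = (if x = e then 1 else 0)"
proof -
  have "(\<Sum>x\<in>E. (if x = e then 1 else 0) *s x) = e"
    using assms(2,3) by (simp add: if_distrib[of "\<lambda>t. t *s _"] sum.delta cong: if_cong)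
  with assms(4) have "(\<Sum>x\<in>E. (c x - (if x = e then 1 else 0)) *s x) = 0"
    by (simp add: vec.scale_left_diff_distrib sum_subtractf)
  then show ?thesis
    using assms(1,5) unfolding vec.independent_explicit by fastforce
qed

lemma sum_cmod_sq_diff_adjoint:
  "(\<Sum>i<N. \<Sum>j<N. (cmod (G i j - cnj (G j i)))\<^sup>2)
     = 2 * (\<Sum>i<N. \<Sum>j<N. (cmod (G i j))\<^sup>2) - 2 * Re (\<Sum>i<N. \<Sum>j<N. G i j * G j i)"
proof -
  have "(cmod (a - cnj b))\<^sup>2 = (cmod a)\<^sup>2 + (cmod b)\<^sup>2 - 2 * Re (a * b)" for a b
    by (simp only: cmod_power2) (simp add: power2_eq_square algebra_simps)
  then have "(\<Sum>i<N. \<Sum>j<N. (cmod (G i j - cnj (G j i)))\<^sup>2)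
      = (\<Sum>i<N. \<Sum>j<N. (cmod (G i j))\<^sup>2) + (\<Sum>i<N. \<Sum>j<N. (cmod (G j i))\<^sup>2)
        - 2 * Re (\<Sum>i<N. \<Sum>j<N. G i j * G j i)"
    by (simp add: sum.distrib sum_subtractf sum_distrib_left)
  also have "(\<Sum>i<N. \<Sum>j<N. (cmod (G j i))\<^sup>2) = (\<Sum>i<N. \<Sum>j<N. (cmod (G i j))\<^sup>2)"
    by (rule sum.swap)
  finally show ?thesis
    by simp
qed

lemma sum_sum_nonneg_eq_0_iff:
  fixes f :: "nat \<Rightarrow> nat \<Rightarrow> real"
  assumes "\<And>i j. 0 \<le> f i j"
  shows "(\<Sum>i<N. \<Sum>j<N. f i j) = 0 \<longleftrightarrow> (\<forall>i<N. \<forall>j<N. f i j = 0)"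
  using assms by (auto simp: sum_nonneg_eq_0_iff sum_nonneg)

locale oblique_dual = subspace_frame W w N
  for W :: "(complex^'n) set" and w :: "nat \<Rightarrow> complex^'n" and N :: nat +
  fixes V :: "(complex^'n) set" and v :: "nat \<Rightarrow> complex^'n"
  assumes subspace_V: "vec.subspace V" and direct_sum: "cdirect_sum W (corth V)"
    and dual: "oblique_dual_frame W V w v N"
begin

definition gram :: "nat \<Rightarrow> nat \<Rightarrow> complex" where
  "gram i j = cinner (w i) (v j)"

lemma dual_mem: "i < N \<Longrightarrow> v i \<in> V"
  using dual by (simp add: frame_for_def oblique_dual_frame_def)

lemma oblique_proj_W_eq: "oblique_proj W (corth V) f = (\<Sum>i<N. cinner f (v i) *s w i)"
  using dual by (simp add: oblique_dual_frame_def)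

lemma W_inter_corth_V: "W \<inter> corth V = {0}"
  using direct_sum by (simp add: cdirect_sum_def)

lemma oblique_proj_W_mem: "oblique_proj W (corth V) f \<in> W \<and> f - oblique_proj W (corth V) f \<in> corth V"
proof -
  obtain a b where "a \<in> W" "b \<in> corth V" "f = a + b"
    using direct_sum unfolding cdirect_sum_def by blast
  then show ?thesis
    using oblique_proj_eqI[OF subspace_W subspace_corth W_inter_corth_V, of a f] by simp
qed

lemma dual_reconstruction: "a \<in> W \<Longrightarrow> (\<Sum>i<N. cinner a (v i) *s w i) = a"
  using oblique_proj_eqI[OF subspace_W subspace_corth W_inter_corth_V, of a a]
  by (simp add: oblique_proj_W_eq vec.subspace_0[OF subspace_corth])

lemma V_inter_corth_W: "V \<inter> corth W = {0}"
proof -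
  have "x = 0" if x: "x \<in> V" "x \<in> corth W" for x
  proof -
    let ?a = "oblique_proj W (corth V) x"
    have "cinner x x = cinner ?a x + cinner (x - ?a) x"
      by (simp add: cinner_diff_left)
    also have "\<dots> = 0"
      using oblique_proj_W_mem[of x] corthD'[OF x(2)] corthD[OF _ x(1)] by simp
    finally show ?thesis
      by simp
  qed
  then show ?thesis
    using subspace_V subspace_corth vec.subspace_0 by blast
qed

lemma oblique_proj_V_diff_mem: "y - oblique_proj V (corth W) y \<in> corth W"
proof -
  let ?a = "\<Sum>i<N. cinner y (w i) *s v i"
  have "?a \<in> V"
    using subspace_V dual_mem by (intro vec.subspace_sum vec.subspace_scale) auto
  moreover have "cinner (y - ?a) x = 0" if x: "x \<in> W" for x
  proof -
    have "cinner y x = cinner y (\<Sum>i<N. cinner x (v i) *s w i)"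
      using dual_reconstruction[OF x] by simp
    also have "\<dots> = cinner ?a x"
      by (simp add: cinner_sum_left cinner_sum_right cinner_scale_left cinner_scale_right)
         (rule sum.cong, simp, subst (2) cinner_commute, simp add: mult.commute)
    finally show ?thesis
      by (simp add: cinner_diff_left)
  qed
  then have "y - ?a \<in> corth W"
    by (simp add: corth_def)
  ultimately show ?thesis
    using oblique_proj_eqI[OF subspace_V subspace_corth V_inter_corth_W] by simp
qed

lemma gram_idempotent:
  assumes "i < N"
  shows "(\<Sum>k<N. gram i k * gram k j) = gram i j"
proof -
  have "(\<Sum>k<N. gram i k * gram k j) = cinner (\<Sum>k<N. cinner (w i) (v k) *s w k) (v j)"
    by (simp add: gram_def cinner_sum_left cinner_scale_left)
  then show ?thesis
    using dual_reconstruction[OF frame_mem[OF assms]] by (simp add: gram_def)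
qed

text \<open>Expanding \<open>w\<^sub>i\<close> in a basis \<open>E\<close> of \<open>W\<close> and reconstructing each \<open>e \<in> E\<close> from the
  dual pair shows \<open>\<Sum>\<^sub>i \<langle>e, v\<^sub>i\<rangle> c\<^sub>i\<^sub>e' = \<delta>\<^sub>e\<^sub>e'\<close>; summing over \<open>e = e'\<close> gives the trace.\<close>
lemma trace_gram: "(\<Sum>i<N. gram i i) = of_nat (vec.dim W)"
proof -
  obtain E where E: "E \<subseteq> W" "vec.independent E" "W \<subseteq> vec.span E" "card E = vec.dim W"
    using vec.basis_exists by blast
  have fin_E: "finite E"
    using E(2) vec.finiteI_independent by blast
  have "\<exists>c. w i = (\<Sum>e\<in>E. c e *s e)" if "i < N" for i
    using frame_mem[OF that] E(3) vec.span_finite[OF fin_E] by auto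
  then obtain c where c: "\<And>i. i < N \<Longrightarrow> w i = (\<Sum>e\<in>E. c i e *s e)"
    by metis
  have delta: "(\<Sum>i<N. cinner e (v i) * c i e') = (if e' = e then 1 else 0)"
    if e: "e \<in> E" "e' \<in> E" for e e'
  proof (rule independent_sum_eq_member[OF E(2) fin_E e(1) _ e(2)])
    have "e = (\<Sum>i<N. cinner e (v i) *s w i)"
      using dual_reconstruction E(1) e by auto
    also have "\<dots> = (\<Sum>i<N. cinner e (v i) *s (\<Sum>e'\<in>E. c i e' *s e'))"
      by (rule sum.cong) (auto simp: c)
    also have "\<dots> = (\<Sum>e'\<in>E. (\<Sum>i<N. cinner e (v i) * c i e') *s e')"
      by (simp add: vec.scale_sum_right vector_smult_assoc sum_distrib_right vec.scale_sum_left)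
         (rule sum.swap)
    finally show "(\<Sum>e'\<in>E. (\<Sum>i<N. cinner e (v i) * c i e') *s e') = e"
      by (rule sym)
  qed
  have "(\<Sum>i<N. gram i i) = (\<Sum>i<N. \<Sum>e\<in>E. c i e * cinner e (v i))"
    by (rule sum.cong) (auto simp: gram_def c cinner_sum_left[OF fin_E] cinner_scale_left)
  also have "\<dots> = (\<Sum>e\<in>E. \<Sum>i<N. cinner e (v i) * c i e)"
    by (subst sum.swap) (simp add: mult.commute)
  also have "\<dots> = of_nat (card E)"
    using delta by simp
  finally show ?thesis
    using E(4) by simp
qed

lemma sum_cmod_sq_gram:
  "(\<Sum>i<N. \<Sum>j<N. (cmod (gram i j - cnj (gram j i)))\<^sup>2)
     = 2 * (\<Sum>i<N. \<Sum>j<N. (cmod (gram i j))\<^sup>2) - 2 * real (vec.dim W)"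
proof -
  have "(\<Sum>i<N. \<Sum>j<N. gram i j * gram j i) = (\<Sum>i<N. gram i i)"
    by (rule sum.cong) (simp_all add: gram_idempotent)
  then show ?thesis
    using sum_cmod_sq_diff_adjoint[of gram N] by (simp add: trace_gram)
qed

lemma dim_le_sum_cmod_sq_gram: "real (vec.dim W) \<le> (\<Sum>i<N. \<Sum>j<N. (cmod (gram i j))\<^sup>2)"
  using sum_cmod_sq_gram sum_nonneg[of "{..<N}" "\<lambda>i. \<Sum>j<N. (cmod (gram i j - cnj (gram j i)))\<^sup>2"]
  by (simp add: sum_nonneg)

lemma sum_cmod_sq_gram_eq_dim_iff:
  "(\<Sum>i<N. \<Sum>j<N. (cmod (gram i j))\<^sup>2) = real (vec.dim W)
     \<longleftrightarrow> (\<forall>i<N. \<forall>j<N. gram i j = cnj (gram j i))"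
  using sum_cmod_sq_gram sum_sum_nonneg_eq_0_iff[of "\<lambda>i j. (cmod (gram i j - cnj (gram j i)))\<^sup>2" N]
  by auto

lemma dual_canonical_if_gram_self_adjoint:
  assumes adj: "\<forall>i<N. \<forall>j<N. gram i j = cnj (gram j i)" and j: "j < N"
  shows "v j = oblique_proj V (corth W) (mp_inverse S *v w j)"
proof -
  have "cinner (v j) (w k) = gram j k" if "k < N" for k
  proof -
    have "gram k j = cnj (gram j k)"
      using adj j that by blast
    then show ?thesis
      by (subst cinner_commute) (simp add: gram_def)
  qed
  then have "S *v v j = (\<Sum>k<N. cinner (w j) (v k) *s w k)"
    unfolding frame_operator_mult_vec by (simp add: gram_def)
  also have "\<dots> = w j"
    using dual_reconstruction[OF frame_mem[OF j]] .
  finally have S_v: "S *v v j = w j" .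
  obtain a b where ab: "a \<in> W" "b \<in> corth W" "v j = a + b"
    using corth_decomp[OF subspace_W] by blast
  then have "S *v a = w j"
    using S_v frame_operator_add_corth by simp
  then have "mp_inverse S *v w j = a"
    using mp_inverse_frame_operator_mult[OF ab(1)] by simp
  then have "mp_inverse S *v w j - v j \<in> corth W"
    using ab vec.subspace_neg[OF subspace_corth] by simp
  then show ?thesis
    using oblique_proj_eqI[OF subspace_V subspace_corth V_inter_corth_W dual_mem[OF j]] by simp
qed

lemma gram_self_adjoint_if_dual_canonical:
  assumes canonical: "\<forall>j<N. v j = oblique_proj V (corth W) (mp_inverse S *v w j)"
    and ij: "i < N" "j < N"
  shows "gram i j = cnj (gram j i)"
proof -
  have gram_eq: "gram i j = cinner (w i) (mp_inverse S *v w j)" if "i < N" "j < N" for i j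
  proof -
    have "mp_inverse S *v w j - v j \<in> corth W"
      using oblique_proj_V_diff_mem[of "mp_inverse S *v w j"] canonical that by simp
    then have "cinner (w i) (mp_inverse S *v w j - v j) = 0"
      using corthD' frame_mem that by blast
    then show ?thesis
      by (simp add: gram_def cinner_diff_right)
  qed
  have "gram i j = cinner (w i) (mp_inverse S *v w j)"
    using gram_eq ij .
  also have "\<dots> = cinner (S *v (mp_inverse S *v w i)) (mp_inverse S *v w j)"
    using frame_operator_mp_inverse[OF frame_mem[OF ij(1)]] by simp
  also have "\<dots> = cinner (mp_inverse S *v w i) (S *v (mp_inverse S *v w j))"
    by (rule cinner_frame_operator)
  also have "\<dots> = cinner (mp_inverse S *v w i) (w j)"
    using frame_operator_mp_inverse[OF frame_mem[OF ij(2)]] by simp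
  also have "\<dots> = cnj (gram j i)"
    using gram_eq ij by (subst cinner_commute) simp
  finally show ?thesis .
qed

lemma gram_self_adjoint_iff:
  "(\<forall>i<N. \<forall>j<N. gram i j = cnj (gram j i)) \<longleftrightarrow>
   (\<forall>j<N. v j = oblique_proj V (corth W) (mp_inverse S *v w j))"
  using dual_canonical_if_gram_self_adjoint gram_self_adjoint_if_dual_canonical by blast

lemma gram_diagonal_const:
  assumes "\<forall>i<N. \<forall>j<N. gram i i = gram j j" "i < N"
  shows "gram i i = of_real (real (vec.dim W) / real N)"
proof -
  have "(\<Sum>j<N. gram j j) = (\<Sum>j<N. gram i i)"
    by (rule sum.cong[OF refl]) (meson assms lessThan_iff)
  then have "of_nat N * gram i i = of_nat (vec.dim W)"
    using trace_gram by simp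
  then have "gram i i = of_nat (vec.dim W) / of_nat N"
    using assms(2) by (simp add: eq_divide_eq mult.commute)
  then show ?thesis
    by simp
qed

end

theorem corollary3p6:
  fixes W V :: "(complex^'n) set" and w v :: "nat \<Rightarrow> complex^'n" and N k :: nat
  assumes "vec.subspace W" and "vec.subspace V"
    and "cdirect_sum W (corth V)"
    and "frame_for W w N"
    and "oblique_dual_frame W V w v N"
    and "\<forall>i<N. \<forall>j<N. cinner (w i) (v i) = cinner (w j) (v j)"
    and "k \<ge> 1"
  defines "S \<equiv> frame_operator w N"
    and "d \<equiv> real (vec.dim W)"
    and "p \<equiv> 2 * k"
  shows "(\<Sum>i<N. \<Sum>j<N. cmod (cinner (w i) (v j)) ^ p)
           \<ge> \<bar>d - d\<^sup>2 / real N\<bar> ^ (p div 2)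
               / (real N ^ (p div 2 - 1) * (real N - 1) ^ (p div 2 - 1))
             + d ^ p / real N ^ (p - 1)
         \<and>
         (k > 1 \<longrightarrow>
          (((\<Sum>i<N. \<Sum>j<N. cmod (cinner (w i) (v j)) ^ p)
             = \<bar>d - d\<^sup>2 / real N\<bar> ^ (p div 2)
               / (real N ^ (p div 2 - 1) * (real N - 1) ^ (p div 2 - 1))
             + d ^ p / real N ^ (p - 1))
          \<longleftrightarrow>
           ((\<exists>c. \<forall>i<N. \<forall>j<N. i \<noteq> j \<longrightarrow> cmod (cinner (w i) (v j)) = c) \<and>
            (\<forall>j<N. v j = oblique_proj V (corth W) (mp_inverse S *v w j)))))"
proof -
  interpret oblique_dual W w N V v
    using assms(1-5) by unfold_locales
  let ?g = "\<lambda>i j. cmod (gram i j)"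
  have d_bounds: "0 \<le> d" "d \<le> real N"
    using frame_dim_le[OF assms(4)] by (simp_all add: d_def)
  have diagonal: "?g i i = d / real N" if "i < N" for i
  proof -
    have "gram i i = of_real (d / real N)"
      using gram_diagonal_const[OF assms(6)[folded gram_def] that] by (simp only: d_def)
    then show ?thesis
      using d_bounds(1) by (simp only: norm_of_real) simp
  qed
  have mass: "d \<le> (\<Sum>i<N. \<Sum>j<N. (?g i j)\<^sup>2)"
    using dim_le_sum_cmod_sq_gram by (simp add: d_def)
  have canonical: "(\<Sum>i<N. \<Sum>j<N. (?g i j)\<^sup>2) = d
      \<longleftrightarrow> (\<forall>j<N. v j = oblique_proj V (corth W) (mp_inverse S *v w j))"
    using sum_cmod_sq_gram_eq_dim_iff gram_self_adjoint_iff by (simp add: d_def S_def)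
  have "2 * k div 2 = k"
    by simp
  then show ?thesis
    using const_diagonal_power_sum_ge[where g = ?g, OF _ diagonal d_bounds mass assms(7)]
      const_diagonal_power_sum_eq_iff[where g = ?g, OF _ diagonal d_bounds mass] canonical
    unfolding p_def gram_def by simp
qed

end
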